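(* Let $G$ be a group, let $K$ be an uncountable algebraically closed field, and let $A$ be an affine algebraic set over $K$. Then every bijective algebraic cellular automaton $\tau\colon A^G\to A^G$ is reversible, i.e., its inverse map $\tau^{-1}\colon A^G\to A^G$ is also a cellular automaton.
   Context: For a group $G$ and a set $A$, $A^G$ is the set of maps $x\colon G\to A$, with the $G$-shift $(gx)(h)=x(g^{-1}h)$. A cellular automaton is a map $\tau\colon A^G\to A^G$ for which there exist a finite subset $M\subset G$ (memory set) and a map $\mu\colon A^M\to A$ (local defining map) with $\tau(x)(g)=\mu((g^{-1}x)|_M)$ for all $x\in A^G$, $g\in G$. A cellular automaton is reversible if it is bijective and its inverse is a cellular automaton. An affine algebraic set over a field $K$ is the common zero set in some $K^m$ of a set of polynomials; a map between affine algebraic sets is regular if it is the restriction of a polynomial map. A cellular automaton $\tau\colon A^G\to A^G$ with $A$ an affine algebraic set over $K$ is algebraic if for some (equivalently any) memory set $M$ the local defining map $\mu\colon A^M\to A$ is regular ($A^M$ being viewed as an affine algebraic set). *)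

theory Defs
  imports Main "HOL-Library.FuncSet" "HOL-Library.Countable_Set"
    "HOL-Computational_Algebra.Polynomial"
begin

inductive_set polyfuns :: "'x set \<Rightarrow> (('x \<Rightarrow> 'k::field) \<Rightarrow> 'k) set"
  for V :: "'x set" where
  pf_const: "(\<lambda>_. c) \<in> polyfuns V"
| pf_var: "v \<in> V \<Longrightarrow> (\<lambda>x. x v) \<in> polyfuns V"
| pf_add: "p \<in> polyfuns V \<Longrightarrow> q \<in> polyfuns V \<Longrightarrow> (\<lambda>x. p x + q x) \<in> polyfuns V"
| pf_mult: "p \<in> polyfuns V \<Longrightarrow> q \<in> polyfuns V \<Longrightarrow> (\<lambda>x. p x * q x) \<in> polyfuns V"

definition alg_closed_field :: "'k::field itself \<Rightarrow> bool" where
  "alg_closed_field _ \<longleftrightarrow> (\<forall>p :: 'k poly. degree p > 0 \<longrightarrow> (\<exists>z. poly p z = 0))"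

text \<open>Affine algebraic set in K^m, points of K^m being maps 'v \<Rightarrow> 'k, 'v a finite
  index type with CARD('v) = m.\<close>
definition affine_algebraic_set :: "('v::finite \<Rightarrow> 'k::field) set \<Rightarrow> bool" where
  "affine_algebraic_set A \<longleftrightarrow>
     (\<exists>S. S \<subseteq> polyfuns UNIV \<and> A = {x. \<forall>p\<in>S. p x = 0})"

text \<open>Configurations A^G; the group G is written additively: 'g :: group_add
  (not necessarily commutative).\<close>
definition configs :: "'a set \<Rightarrow> ('g \<Rightarrow> 'a) set" where
  "configs A = {x. \<forall>g. x g \<in> A}"

definition shift :: "'g::group_add \<Rightarrow> ('g \<Rightarrow> 'a) \<Rightarrow> ('g \<Rightarrow> 'a)" where
  "shift g x = (\<lambda>h. x (- g + h))"

definition ca_local :: "'a set \<Rightarrow> 'g::group_add set \<Rightarrow> (('g \<Rightarrow> 'a) \<Rightarrow> 'a)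
    \<Rightarrow> (('g \<Rightarrow> 'a) \<Rightarrow> ('g \<Rightarrow> 'a)) \<Rightarrow> bool" where
  "ca_local A M \<mu> \<tau> \<longleftrightarrow> finite M \<and> (\<forall>p \<in> M \<rightarrow>\<^sub>E A. \<mu> p \<in> A) \<and>
     (\<forall>x \<in> configs A. \<forall>g. \<tau> x g = \<mu> (restrict (shift (- g) x) M))"

definition cellular_automaton :: "'a set \<Rightarrow> (('g::group_add \<Rightarrow> 'a) \<Rightarrow> ('g \<Rightarrow> 'a)) \<Rightarrow> bool" where
  "cellular_automaton A \<tau> \<longleftrightarrow> (\<exists>M \<mu>. ca_local A M \<mu> \<tau>)"

text \<open>Regular map A^M \<rightarrow> A: restriction of a polynomial map K^(M\<times>m) \<rightarrow> K^m.\<close>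
definition regular_local :: "('v::finite \<Rightarrow> 'k::field) set \<Rightarrow> 'g set
    \<Rightarrow> (('g \<Rightarrow> 'v \<Rightarrow> 'k) \<Rightarrow> ('v \<Rightarrow> 'k)) \<Rightarrow> bool" where
  "regular_local A M \<mu> \<longleftrightarrow> (\<forall>v. \<exists>P \<in> polyfuns (M \<times> UNIV).
      \<forall>p \<in> M \<rightarrow>\<^sub>E A. \<mu> p v = P (\<lambda>(h, w). p h w))"

definition algebraic_ca :: "('v::finite \<Rightarrow> 'k::field) set
    \<Rightarrow> (('g::group_add \<Rightarrow> 'v \<Rightarrow> 'k) \<Rightarrow> ('g \<Rightarrow> 'v \<Rightarrow> 'k)) \<Rightarrow> bool" where
  "algebraic_ca A \<tau> \<longleftrightarrow> (\<exists>M \<mu>. ca_local A M \<mu> \<tau> \<and> regular_local A M \<mu>)"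

definition reversible_ca :: "'a set \<Rightarrow> (('g::group_add \<Rightarrow> 'a) \<Rightarrow> ('g \<Rightarrow> 'a)) \<Rightarrow> bool" where
  "reversible_ca A \<tau> \<longleftrightarrow> bij_betw \<tau> (configs A) (configs A) \<and>
     cellular_automaton A (the_inv_into (configs A) \<tau>)"

end

theory Submission imports Defs "HOL-Library.Function_Algebras"
begin

text \<open>
  Let \<tau> be a bijective algebraic cellular automaton on A^G with memory set M
  and polynomial local rule.  The inverse of \<tau> is a cellular automaton as soon as the value
  x(0) is determined by the values of \<tau>(x) on a fixed finite window N; the rest follows by
  shift-equivariance.  Suppose no such window exists.  Then for every finite N there are x, y
  with \<tau>(x) = \<tau>(y) on N and x(0) \<noteq> y(0).  Written over the countable subgroup H generated
  by M, these requirements form a system of polynomial equations in countably many variables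
  (two copies of a configuration on H, plus Rabinowitsch variables encoding x(0) \<noteq> y(0)),
  every finite subsystem of which is solvable.  Over an uncountable algebraically closed field
  such a system is solvable (a compactness form of the Nullstellensatz), and a solution yields
  two distinct configurations with the same image, contradicting injectivity.
\<close>

section \<open>Polynomial functions as a ring of functions\<close>

text \<open>Polynomial functions live in the pointwise function ring; evaluation rules are
  applied explicitly (collected as fun_eval) so that the simplifier keeps function-level terms.\<close>

declare plus_fun_apply[simp del] times_fun_apply[simp del] zero_fun_apply[simp del]
  one_fun_apply[simp del] uminus_apply[simp del] minus_apply[simp del]

definition cst :: "'k \<Rightarrow> ('x \<Rightarrow> 'k) \<Rightarrow> 'k" where "cst c = (\<lambda>_. c)"
definition var :: "'x \<Rightarrow> ('x \<Rightarrow> 'k) \<Rightarrow> 'k" where "var v = (\<lambda>x. x v)"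

lemma cst_apply: "cst c x = c" by (simp add: cst_def)
lemma var_apply: "var v x = x v" by (simp add: var_def)

lemmas fun_eval = plus_fun_apply times_fun_apply zero_fun_apply one_fun_apply
  uminus_apply minus_apply cst_apply var_apply

lemma fun_sum_apply: "(\<Sum>a\<in>A. f a) x = (\<Sum>a\<in>A. f a x)"
  by (induction A rule: infinite_finite_induct) (auto simp: fun_eval)

lemma fun_prod_apply: "(\<Prod>a\<in>A. f a) x = (\<Prod>a\<in>A. f a x)"
  by (induction A rule: infinite_finite_induct) (auto simp: fun_eval)

context fixes V :: "'x set" begin

lemma pf_cst[simp,intro]: "cst c \<in> (polyfuns V :: (('x \<Rightarrow> 'k::field) \<Rightarrow> 'k) set)"
  unfolding cst_def by (rule pf_const)
lemma pf_var'[intro]: "v \<in> V \<Longrightarrow> (var v :: ('x \<Rightarrow> 'k::field) \<Rightarrow> 'k) \<in> polyfuns V"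
  unfolding var_def by (rule pf_var)
lemma pf_add'[intro]: "p \<in> polyfuns V \<Longrightarrow> q \<in> polyfuns V \<Longrightarrow> p + q \<in> polyfuns V"
  using pf_add[of p V q] by (simp add: plus_fun_def)
lemma pf_mult'[intro]: "p \<in> polyfuns V \<Longrightarrow> q \<in> polyfuns V \<Longrightarrow> p * q \<in> polyfuns V"
  using pf_mult[of p V q] by (simp add: times_fun_def)
lemma pf_one[simp,intro]: "(1::('x \<Rightarrow> 'k::field) \<Rightarrow> 'k) \<in> polyfuns V"
  using pf_cst[of 1] by (simp add: cst_def one_fun_def)
lemma pf_zero[simp,intro]: "(0::('x \<Rightarrow> 'k::field) \<Rightarrow> 'k) \<in> polyfuns V"
  using pf_cst[of 0] by (simp add: cst_def zero_fun_def)
lemma pf_neg[intro]: "p \<in> polyfuns V \<Longrightarrow> - p \<in> polyfuns V"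
proof -
  assume "p \<in> polyfuns V"
  moreover have "cst (-1) * p = - p" by (auto simp: fun_eq_iff fun_eval)
  ultimately show ?thesis using pf_mult'[of "cst (-1)" p] by auto
qed
lemma pf_diff[intro]: "p \<in> polyfuns V \<Longrightarrow> q \<in> polyfuns V \<Longrightarrow> p - q \<in> polyfuns V"
  using pf_add'[of p "-q"] pf_neg[of q] by simp
lemma pf_sum[intro]: "(\<And>a. a \<in> A \<Longrightarrow> f a \<in> polyfuns V) \<Longrightarrow> sum f A \<in> polyfuns V"
  by (induction A rule: infinite_finite_induct) auto
lemma pf_prod[intro]: "(\<And>a. a \<in> A \<Longrightarrow> f a \<in> polyfuns V) \<Longrightarrow> prod f A \<in> polyfuns V"
  by (induction A rule: infinite_finite_induct) auto

lemma pf_poly: "v \<in> V \<Longrightarrow> (\<lambda>x. poly q (x v)) \<in> (polyfuns V :: (('x \<Rightarrow> 'k::field) \<Rightarrow> 'k) set)"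
proof (induction q)
  case 0 then show ?case using pf_zero by (simp add: zero_fun_def)
next
  case (pCons a p)
  then have "cst a + var v * (\<lambda>x. poly p (x v)) \<in> (polyfuns V :: (('x \<Rightarrow> 'k::field) \<Rightarrow> 'k) set)"
    by auto
  moreover have "cst a + var v * (\<lambda>x. poly p (x v)) = (\<lambda>x. poly (pCons a p) (x v))"
    by (auto simp: fun_eq_iff fun_eval)
  ultimately show ?case by simp
qed

section \<open>Ideals of polynomial functions\<close>

inductive_set pideal :: "(('x \<Rightarrow> 'k::field) \<Rightarrow> 'k) set \<Rightarrow> (('x \<Rightarrow> 'k) \<Rightarrow> 'k) set" for T where
  pideal_0: "0 \<in> pideal T"
| pideal_gen: "r \<in> polyfuns V \<Longrightarrow> t \<in> T \<Longrightarrow> r * t \<in> pideal T"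
| pideal_add: "a \<in> pideal T \<Longrightarrow> b \<in> pideal T \<Longrightarrow> a + b \<in> pideal T"

lemma pideal_mult: "a \<in> pideal T \<Longrightarrow> r \<in> polyfuns V \<Longrightarrow> r * a \<in> pideal T"
proof (induction a rule: pideal.induct)
  case pideal_0 then show ?case by (metis pideal.pideal_0 mult_zero_right)
next
  case (pideal_gen r' t) then show ?case
    using pideal.pideal_gen[of "r * r'" t T] by (auto simp: mult.assoc)
next
  case (pideal_add a b) then show ?case using pideal.pideal_add by (auto simp: distrib_left)
qed

lemma pideal_base: "t \<in> T \<Longrightarrow> t \<in> pideal T"
  using pideal_gen[of 1 t T] by simp

lemma pideal_diff: "a \<in> pideal T \<Longrightarrow> b \<in> pideal T \<Longrightarrow> a - b \<in> pideal T"
proof -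
  assume a: "a \<in> pideal T" and b: "b \<in> pideal T"
  have "a + cst (-1) * b \<in> pideal T" using pideal_add[OF a pideal_mult[OF b]] by simp
  moreover have "a + cst (-1) * b = a - b" by (auto simp: fun_eq_iff fun_eval)
  ultimately show ?thesis by simp
qed

lemma pideal_sum: "(\<And>a. a \<in> A \<Longrightarrow> f a \<in> pideal T) \<Longrightarrow> sum f A \<in> pideal T"
  by (induction A rule: infinite_finite_induct) (auto intro: pideal_0 pideal_add)

lemma pideal_mono: "T \<subseteq> T' \<Longrightarrow> pideal T \<subseteq> pideal T'"
proof
  fix a assume TT: "T \<subseteq> T'"
  assume "a \<in> pideal T"
  then show "a \<in> pideal T'"
    by (induction a rule: pideal.induct) (use TT in \<open>auto intro: pideal.intros\<close>)
qed

lemma pideal_insert: "a \<in> pideal (insert g T) \<Longrightarrow> \<exists>i\<in>pideal T. \<exists>r\<in>polyfuns V. a = i + r * g"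
proof (induction a rule: pideal.induct)
  case pideal_0 then show ?case by (intro bexI[of _ 0]) (auto intro: pideal.intros)
next
  case (pideal_gen r t)
  show ?case
  proof (cases "t = g")
    case True then show ?thesis
      using pideal_gen by (intro bexI[of _ 0] bexI[of _ r]) (auto intro: pideal.intros)
  next
    case False then show ?thesis
      using pideal_gen by (intro bexI[of _ "r * t"] bexI[of _ 0]) (auto intro: pideal.intros)
  qed
next
  case (pideal_add a b)
  then obtain i1 r1 i2 r2 where "i1 \<in> pideal T" "r1 \<in> polyfuns V" "a = i1 + r1 * g"
    "i2 \<in> pideal T" "r2 \<in> polyfuns V" "b = i2 + r2 * g" by blast
  then show ?case
    by (intro bexI[of _ "i1 + i2"] bexI[of _ "r1 + r2"]) (auto intro: pideal.intros simp: algebra_simps)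
qed

lemma pideal_vanishes_finite:
  "a \<in> pideal T \<Longrightarrow> \<exists>F. finite F \<and> F \<subseteq> T \<and> (\<forall>c. (\<forall>t\<in>F. t c = 0) \<longrightarrow> a c = 0)"
proof (induction a rule: pideal.induct)
  case pideal_0 then show ?case by (intro exI[of _ "{}"]) (auto simp: fun_eval)
next
  case (pideal_gen r t) then show ?case by (intro exI[of _ "{t}"]) (auto simp: fun_eval)
next
  case (pideal_add a b)
  then obtain F1 F2 where "finite F1 \<and> F1 \<subseteq> T \<and> (\<forall>c. (\<forall>t\<in>F1. t c = 0) \<longrightarrow> a c = 0)"
    "finite F2 \<and> F2 \<subseteq> T \<and> (\<forall>c. (\<forall>t\<in>F2. t c = 0) \<longrightarrow> b c = 0)" by blast
  then show ?case by (intro exI[of _ "F1 \<union> F2"]) (auto simp: fun_eval)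
qed

lemma pideal_unit_const: "cst c \<in> pideal T \<Longrightarrow> c \<noteq> 0 \<Longrightarrow> 1 \<in> pideal T"
  using pideal_mult[of "cst c" T "cst (1 / c)"] by (simp add: fun_eq_iff fun_eval times_fun_def one_fun_def)

text \<open>The linear generators x_w - c_w (w \<in> W) of the maximal ideal of the point c.\<close>
definition point_gens :: "('x \<Rightarrow> 'k::field) \<Rightarrow> 'x set \<Rightarrow> (('x \<Rightarrow> 'k) \<Rightarrow> 'k) set" where
  "point_gens c W = (\<lambda>w. var w - cst (c w)) ` W"

lemma pideal_point_gens_mono:
  "W \<subseteq> W' \<Longrightarrow> pideal (point_gens c W) \<subseteq> pideal (point_gens c W')"
  unfolding point_gens_def by (intro pideal_mono image_mono)

lemma pf_expand_at_point:
  assumes "p \<in> polyfuns V"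
  shows "\<exists>W. finite W \<and> W \<subseteq> V \<and> (\<forall>c. p - cst (p c) \<in> pideal (point_gens c W))"
  using assms
proof (induction p rule: polyfuns.induct)
  case (pf_const a)
  have zero: "(\<lambda>_. a) - cst a = 0" by (auto simp: fun_eq_iff fun_eval)
  have "\<forall>c. (\<lambda>_. a) - cst ((\<lambda>_. a) c) \<in> pideal (point_gens c {})"
    unfolding zero by (simp add: pideal_0)
  then show ?case by blast
next
  case (pf_var v)
  have "(\<lambda>x. x v) - cst ((\<lambda>x. x v) c) \<in> pideal (point_gens c {v})" for c
    by (rule pideal_base) (simp add: point_gens_def var_def)
  then show ?case using pf_var by blast
next
  case (pf_add p q)
  then obtain W1 W2 where W1: "finite W1" "W1 \<subseteq> V" "\<forall>c. p - cst (p c) \<in> pideal (point_gens c W1)"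
    and W2: "finite W2" "W2 \<subseteq> V" "\<forall>c. q - cst (q c) \<in> pideal (point_gens c W2)" by blast
  have "(\<lambda>x. p x + q x) - cst (p c + q c) \<in> pideal (point_gens c (W1 \<union> W2))" for c
  proof -
    have "(p - cst (p c)) + (q - cst (q c)) \<in> pideal (point_gens c (W1 \<union> W2))"
      using W1(3) W2(3) pideal_point_gens_mono[of _ "W1 \<union> W2" c]
      by (intro pideal_add) auto
    moreover have "(p - cst (p c)) + (q - cst (q c)) = (\<lambda>x. p x + q x) - cst (p c + q c)"
      by (auto simp: fun_eq_iff fun_eval)
    ultimately show ?thesis by simp
  qed
  then show ?case using W1 W2 by (intro exI[of _ "W1 \<union> W2"]) auto
next
  case (pf_mult p q)
  then obtain W1 W2 where W1: "finite W1" "W1 \<subseteq> V" "\<forall>c. p - cst (p c) \<in> pideal (point_gens c W1)"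
    and W2: "finite W2" "W2 \<subseteq> V" "\<forall>c. q - cst (q c) \<in> pideal (point_gens c W2)" by blast
  have "(\<lambda>x. p x * q x) - cst (p c * q c) \<in> pideal (point_gens c (W1 \<union> W2))" for c
  proof -
    have "cst (q c) * (p - cst (p c)) + p * (q - cst (q c)) \<in> pideal (point_gens c (W1 \<union> W2))"
      using W1(3) W2(3) pideal_point_gens_mono[of _ "W1 \<union> W2" c] pf_mult(1)
      by (intro pideal_add pideal_mult) auto
    moreover have "cst (q c) * (p - cst (p c)) + p * (q - cst (q c))
        = (\<lambda>x. p x * q x) - cst (p c * q c)"
      by (auto simp: fun_eq_iff fun_eval algebra_simps)
    ultimately show ?thesis by simp
  qed
  then show ?case using W1 W2 by (intro exI[of _ "W1 \<union> W2"]) auto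
qed

end

section \<open>Polynomial functions in countably many variables span a countable-dimensional space\<close>

definition fscale :: "'k::field \<Rightarrow> ('a \<Rightarrow> 'k) \<Rightarrow> ('a \<Rightarrow> 'k)" where
  "fscale c f = (\<lambda>x. c * f x)"

interpretation fvs: vector_space "fscale :: 'k::field \<Rightarrow> ('a \<Rightarrow> 'k) \<Rightarrow> ('a \<Rightarrow> 'k)"
  by unfold_locales (auto simp: fscale_def fun_eq_iff fun_eval algebra_simps)

definition mons :: "'x set \<Rightarrow> (('x \<Rightarrow> 'k::field) \<Rightarrow> 'k) set" where
  "mons V = (\<lambda>vs. prod_list (map var vs)) ` lists V"

lemma mons_mult: "x \<in> mons V \<Longrightarrow> y \<in> mons V \<Longrightarrow> x * y \<in> mons V"
  unfolding mons_def by (auto intro!: image_eqI[of _ _ "_ @ _"])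

lemma mons_one: "1 \<in> mons V"
  unfolding mons_def by (intro image_eqI[of _ _ "[]"]) auto

lemma mons_var: "v \<in> V \<Longrightarrow> var v \<in> mons V"
  unfolding mons_def by (intro image_eqI[of _ _ "[v]"]) auto

lemma mons_countable: "countable V \<Longrightarrow> countable (mons V)"
  unfolding mons_def by auto

lemma span_mons_mult:
  assumes x: "x \<in> fvs.span (mons V)" and y: "y \<in> fvs.span (mons V)"
  shows "x * y \<in> fvs.span (mons V)"
proof -
  have scale: "fscale c a * b = fscale c (a * b)" "a * fscale c b = fscale c (a * b)" for c a b
    by (simp_all add: fscale_def fun_eq_iff fun_eval algebra_simps)
  have mon: "m * z \<in> fvs.span (mons V)" if m: "m \<in> mons V" and z: "z \<in> fvs.span (mons V)" for m z
    using z
  proof (induction rule: fvs.span_induct_alt)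
    case base then show ?case by (simp add: fvs.span_zero)
  next
    case (step c a z)
    have "m * (fscale c a + z) = fscale c (m * a) + m * z" by (simp add: scale distrib_left)
    then show ?case
      using step m mons_mult fvs.span_base fvs.span_add fvs.span_scale by metis
  qed
  show ?thesis
    using x
  proof (induction rule: fvs.span_induct_alt)
    case base then show ?case by (simp add: fvs.span_zero)
  next
    case (step c a z)
    have "(fscale c a + z) * y = fscale c (a * y) + z * y" by (simp add: scale distrib_right)
    then show ?case using step mon[OF _ y] fvs.span_add fvs.span_scale by metis
  qed
qed

lemma pf_in_span_mons: "p \<in> polyfuns V \<Longrightarrow> p \<in> fvs.span (mons V)"
proof (induction p rule: polyfuns.induct)
  case (pf_const c)
  have "(\<lambda>_. c) = fscale c 1" by (simp add: fscale_def fun_eq_iff fun_eval)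
  then show ?case using fvs.span_scale[OF fvs.span_base[OF mons_one]] by metis
next
  case (pf_var v)
  then show ?case using fvs.span_base[OF mons_var[OF pf_var]] by (simp add: var_def)
next
  case (pf_add p q)
  then show ?case using fvs.span_add[of p _ q] by (simp add: plus_fun_def)
next
  case (pf_mult p q)
  then show ?case using span_mons_mult[of p V q] by (simp add: times_fun_def)
qed

text \<open>The family is covered by countably many finite-dimensional spans, so one of them
  contains infinitely many members of the family.\<close>
lemma uncountable_family_dependent:
  fixes U :: "'i \<Rightarrow> ('x \<Rightarrow> 'k::field) \<Rightarrow> 'k"
  assumes unc: "uncountable (UNIV :: 'i set)" and cV: "countable V"
    and UR: "\<And>a. U a \<in> polyfuns V" and injU: "inj U"
  shows "\<exists>A0 c a0. finite A0 \<and> a0 \<in> A0 \<and> c a0 \<noteq> 0 \<and> (\<forall>x. (\<Sum>a\<in>A0. c a * U a x) = 0)"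
proof -
  define e where "e = from_nat_into (mons V :: (('x \<Rightarrow> 'k) \<Rightarrow> 'k) set)"
  have rng: "range e = mons V" unfolding e_def
    using mons_countable[OF cV] mons_one[of V] by (intro range_from_nat_into) auto
  have "\<exists>n. U a \<in> fvs.span (e ` {..<n})" for a
  proof -
    obtain t r where t: "U a = (\<Sum>b\<in>t. fscale (r b) b)" "finite t" "t \<subseteq> range e"
      using pf_in_span_mons[OF UR] rng unfolding fvs.span_explicit by blast
    obtain C where C: "finite C" "t = e ` C" using finite_subset_image[OF t(2,3)] by blast
    obtain n where "C \<subseteq> {..<n}" using finite_nat_bounded[OF C(1)] by blast
    then have "e ` C \<subseteq> e ` {..<n}" by auto
    moreover have "U a \<in> fvs.span (e ` C)"
      unfolding t(1) C(2) by (intro fvs.span_sum fvs.span_scale fvs.span_base)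
    ultimately show ?thesis using fvs.span_mono by blast
  qed
  then obtain N where N: "\<And>a. U a \<in> fvs.span (e ` {..<N a})" by metis
  have "\<exists>n. infinite {a. N a = n}"
  proof (rule ccontr)
    assume "\<not> ?thesis"
    then have "countable (\<Union>n. {a. N a = n})" by (intro countable_UN) (auto intro: countable_finite)
    moreover have "(\<Union>n. {a. N a = n}) = UNIV" by auto
    ultimately show False using unc by simp
  qed
  then obtain n where n: "infinite {a. N a = n}" by blast
  have "infinite (U ` {a. N a = n})" using n injU by (simp add: finite_image_iff inj_on_subset)
  moreover have "U ` {a. N a = n} \<subseteq> fvs.span (e ` {..<n})" using N by auto
  ultimately have "fvs.dependent (U ` {a. N a = n})"
    using fvs.independent_span_bound[OF finite_imageI[OF finite_lessThan]] by blast
  then obtain t w where t: "finite t" "t \<subseteq> U ` {a. N a = n}" "(\<Sum>f\<in>t. fscale (w f) f) = 0"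
    and nz: "\<exists>f\<in>t. w f \<noteq> 0"
    unfolding fvs.dependent_explicit by blast
  define A0 where "A0 = U -` t"
  have tA: "t = U ` A0" using t(2) unfolding A0_def by auto
  have fin: "finite A0" unfolding A0_def using finite_vimageI[OF t(1) injU] .
  obtain a0 where a0: "a0 \<in> A0" "w (U a0) \<noteq> 0" using nz tA by auto
  have "(\<Sum>a\<in>A0. fscale (w (U a)) (U a)) = 0"
    using t(3) unfolding tA by (subst (asm) sum.reindex) (use injU in \<open>auto intro: inj_on_subset\<close>)
  then have "\<forall>x. (\<Sum>a\<in>A0. w (U a) * U a x) = 0"
    by (simp add: fun_eq_iff fun_sum_apply fscale_def fun_eval)
  with fin a0 show ?thesis by (intro exI[of _ A0] exI[of _ "\<lambda>a. w (U a)"] exI[of _ a0]) simp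
qed

section \<open>Extending a proper ideal by one coordinate of a point\<close>

text \<open>Over an algebraically closed field: if every x_v - b is invertible modulo the ideal,
  then any nonzero univariate polynomial in x_v lying in the ideal forces the unit ideal
  (split off the linear factors one by one).\<close>
lemma univariate_in_ideal_unit:
  fixes T :: "(('x \<Rightarrow> 'k::field) \<Rightarrow> 'k) set"
  assumes ac: "alg_closed_field TYPE('k)" and v: "v \<in> V"
    and inv: "\<And>b. \<exists>u\<in>polyfuns V. 1 - u * (var v - cst b) \<in> pideal V T"
    and "q \<noteq> 0" and "(\<lambda>x. poly q (x v)) \<in> pideal V T"
  shows "1 \<in> pideal V T"
  using assms(4,5)
proof (induction "degree q" arbitrary: q rule: less_induct)
  case less
  show ?case
  proof (cases "degree q = 0")
    case True
    then obtain c where "q = [:c:]" by (rule degree_eq_zeroE)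
    with less have "c \<noteq> 0" "(\<lambda>x. poly q (x v)) = cst c" by (auto simp: cst_def)
    then show ?thesis using pideal_unit_const less(3) by metis
  next
    case False
    then obtain b where "poly q b = 0" using ac unfolding alg_closed_field_def by auto
    then obtain q' where q: "q = [:-b, 1:] * q'" using poly_eq_0_iff_dvd by (metis dvdE)
    have q0: "q' \<noteq> 0" using less(2) q by auto
    have "degree q = degree [:-b, 1:] + degree q'"
      unfolding q by (rule degree_mult_eq) (use q0 in auto)
    then have deg: "degree q' < degree q" by simp
    obtain u where u: "u \<in> polyfuns V" "1 - u * (var v - cst b) \<in> pideal V T" using inv by blast
    let ?Q = "\<lambda>x. poly q' (x v)"
    have "?Q = ?Q * (1 - u * (var v - cst b)) + u * (\<lambda>x. poly q (x v))"
      by (auto simp: fun_eq_iff fun_eval q algebra_simps)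
    moreover have "?Q * (1 - u * (var v - cst b)) \<in> pideal V T"
      by (rule pideal_mult[OF u(2) pf_poly[OF v]])
    moreover have "u * (\<lambda>x. poly q (x v)) \<in> pideal V T" by (rule pideal_mult[OF less(3) u(1)])
    ultimately have "?Q \<in> pideal V T" using pideal_add by metis
    then show ?thesis using less(1)[OF deg q0] by blast
  qed
qed

text \<open>A linear dependency among the inverses U_a of x_v - a modulo the ideal produces a
  nonzero univariate polynomial in x_v inside the ideal, namely
  q(y) = \<Sum>_a c_a \<Prod>_{b \<noteq> a} (y - b); hence the ideal is the unit ideal.\<close>
lemma dependent_inverses_unit:
  fixes T :: "(('x \<Rightarrow> 'k::field) \<Rightarrow> 'k) set"
  assumes ac: "alg_closed_field TYPE('k)" and v: "v \<in> V"
    and fin: "finite A0" and a0: "a0 \<in> A0" "c a0 \<noteq> 0"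
    and dep: "\<And>x. (\<Sum>a\<in>A0. c a * U a x) = 0"
    and UR: "\<And>a. U a \<in> polyfuns V"
    and UI: "\<And>a. 1 - U a * (var v - cst a) \<in> pideal V T"
  shows "1 \<in> pideal V T"
proof -
  define q where "q = (\<Sum>a\<in>A0. smult (c a) (\<Prod>b\<in>A0-{a}. [:-b, 1:]))"
  have pq: "poly q y = (\<Sum>a\<in>A0. c a * (\<Prod>b\<in>A0-{a}. (y - b)))" for y
    by (simp add: q_def poly_sum poly_prod)
  have "poly q a0 = c a0 * (\<Prod>b\<in>A0-{a0}. (a0 - b))"
  proof -
    have "(\<Sum>a\<in>A0-{a0}. c a * (\<Prod>b\<in>A0-{a}. (a0 - b))) = 0"
      using fin a0(1) by (intro sum.neutral) (auto intro: prod_zero)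
    then show ?thesis unfolding pq sum.remove[OF fin a0(1)] by simp
  qed
  then have q0: "q \<noteq> 0" using fin a0 by auto
  define Q where "Q a = (\<Prod>b\<in>A0-{a}. (var v - cst b))" for a
  have QR: "Q a \<in> polyfuns V" for a unfolding Q_def using v by (intro pf_prod pf_diff) auto
  have "(\<lambda>x. poly q (x v)) = (\<Sum>a\<in>A0. (cst (c a) * Q a) * (1 - U a * (var v - cst a)))"
  proof (rule ext)
    fix x
    have rem: "(x v - a) * (\<Prod>b\<in>A0-{a}. (x v - b)) = (\<Prod>b\<in>A0. (x v - b))" if "a \<in> A0" for a
      using prod.remove[OF fin that, of "\<lambda>b. x v - b"] by simp
    have "(\<Sum>a\<in>A0. (cst (c a) * Q a) * (1 - U a * (var v - cst a))) x
      = (\<Sum>a\<in>A0. c a * (\<Prod>b\<in>A0-{a}. (x v - b)) - (c a * U a x) * ((x v - a) * (\<Prod>b\<in>A0-{a}. (x v - b))))"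
      by (simp add: Q_def fun_sum_apply fun_prod_apply fun_eval algebra_simps)
    also have "\<dots> = (\<Sum>a\<in>A0. c a * (\<Prod>b\<in>A0-{a}. (x v - b)) - (c a * U a x) * (\<Prod>b\<in>A0. (x v - b)))"
      by (rule sum.cong) (auto simp: rem)
    also have "\<dots> = poly q (x v)"
      using dep[of x] by (simp add: pq sum_subtractf flip: sum_distrib_right)
    finally show "poly q (x v) = (\<Sum>a\<in>A0. (cst (c a) * Q a) * (1 - U a * (var v - cst a))) x" by simp
  qed
  then have "(\<lambda>x. poly q (x v)) \<in> pideal V T"
    using QR UI by (auto intro!: pideal_sum pideal_mult)
  moreover have "\<exists>u\<in>polyfuns V. 1 - u * (var v - cst b) \<in> pideal V T" for b using UR UI by blast
  ultimately show ?thesis using univariate_in_ideal_unit[OF ac v _ q0] by blast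
qed

text \<open>If x_v - a and x_v - b (a \<noteq> b) have the same inverse U modulo a proper ideal, then
  U lies in the ideal (subtract the two relations), and then so does 1.  So distinct
  values have distinct inverses.\<close>
lemma inverses_injective:
  fixes T :: "(('x \<Rightarrow> 'k::field) \<Rightarrow> 'k) set"
  assumes v: "v \<in> V" and proper: "1 \<notin> pideal V T"
    and UI: "\<And>a. 1 - U a * (var v - cst a) \<in> pideal V T"
  shows "inj U"
proof (rule injI, rule ccontr)
  fix a b assume eq: "U a = U b" and ab: "a \<noteq> b"
  have "(1 - U a * (var v - cst a)) - (1 - U b * (var v - cst b)) = cst (a - b) * U a"
    using eq by (simp add: fun_eq_iff fun_eval algebra_simps)
  then have "cst (1 / (a - b)) * (cst (a - b) * U a) \<in> pideal V T"
    using UI by (metis pideal_diff pideal_mult pf_cst)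
  moreover have "cst (1 / (a - b)) * (cst (a - b) * U a) = U a"
    using ab by (simp add: fun_eq_iff fun_eval)
  ultimately have "(var v - cst a) * U a \<in> pideal V T" using v by (intro pideal_mult) auto
  then have "(1 - U a * (var v - cst a)) + (var v - cst a) * U a \<in> pideal V T"
    by (rule pideal_add[OF UI])
  then show False using proper by (simp add: algebra_simps)
qed

lemma extend_proper_ideal:
  fixes T :: "(('x \<Rightarrow> 'k::field) \<Rightarrow> 'k) set"
  assumes unc: "uncountable (UNIV :: 'k set)" and ac: "alg_closed_field TYPE('k)"
    and cV: "countable V" and v: "v \<in> V" and proper: "1 \<notin> pideal V T"
  shows "\<exists>a. 1 \<notin> pideal V (insert (var v - cst a) T)"
proof (rule ccontr)
  assume no_ext: "\<not> ?thesis"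
  have "\<exists>u\<in>polyfuns V. 1 - u * (var v - cst a) \<in> pideal V T" for a
  proof -
    from no_ext have "1 \<in> pideal V (insert (var v - cst a) T)" by blast
    then obtain i r where "i \<in> pideal V T" "r \<in> polyfuns V" "1 = i + r * (var v - cst a)"
      using pideal_insert by blast
    then show ?thesis by (intro bexI[of _ r]) (auto simp: algebra_simps)
  qed
  then obtain U where UR: "\<And>a. U a \<in> polyfuns V"
    and UI: "\<And>a. 1 - U a * (var v - cst a) \<in> pideal V T" by metis
  have "inj U" using inverses_injective[OF v proper UI] .
  from uncountable_family_dependent[where U = U, OF unc cV UR this] obtain A0 c a0 where
    dep: "finite A0" "a0 \<in> A0" "c a0 \<noteq> 0" "\<forall>x. (\<Sum>a\<in>A0. c a * U a x) = 0"
    by (elim exE conjE)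
  have "1 \<in> pideal V T" by (rule dependent_inverses_unit[OF ac v dep(1-3) dep(4)[rule_format] UR UI])
  then show False using proper by simp
qed

section \<open>Compactness for polynomial equations in countably many variables\<close>

text \<open>A chosen admissible value for the variable v, and the chain of proper ideals obtained
  by fixing the variables e 0, e 1, ... one after the other.\<close>
definition step_val :: "'x set \<Rightarrow> (('x \<Rightarrow> 'k::field) \<Rightarrow> 'k) set \<Rightarrow> 'x \<Rightarrow> 'k" where
  "step_val V T v = (SOME a. 1 \<notin> pideal V (insert (var v - cst a) T))"

primrec gen_chain :: "'x set \<Rightarrow> (('x \<Rightarrow> 'k::field) \<Rightarrow> 'k) set \<Rightarrow> (nat \<Rightarrow> 'x) \<Rightarrow> nat
    \<Rightarrow> (('x \<Rightarrow> 'k) \<Rightarrow> 'k) set" where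
  "gen_chain V S e 0 = S"
| "gen_chain V S e (Suc n) = (if e n \<in> V
     then insert (var (e n) - cst (step_val V (gen_chain V S e n) (e n))) (gen_chain V S e n)
     else gen_chain V S e n)"

lemma gen_chain_proper:
  fixes S :: "(('x \<Rightarrow> 'k::field) \<Rightarrow> 'k) set"
  assumes unc: "uncountable (UNIV :: 'k set)" and ac: "alg_closed_field TYPE('k)"
    and cV: "countable V" and proper: "1 \<notin> pideal V S"
  shows "1 \<notin> pideal V (gen_chain V S e n)"
proof (induction n)
  case 0 then show ?case using proper by simp
next
  case (Suc n)
  show ?case
  proof (cases "e n \<in> V")
    case True
    have "\<exists>a. 1 \<notin> pideal V (insert (var (e n) - cst a) (gen_chain V S e n))"
      by (rule extend_proper_ideal[OF unc ac cV True Suc])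
    then have "1 \<notin> pideal V
        (insert (var (e n) - cst (step_val V (gen_chain V S e n) (e n))) (gen_chain V S e n))"
      unfolding step_val_def by (rule someI_ex)
    then show ?thesis using True by simp
  qed (use Suc in simp)
qed

lemma gen_chain_mono: "m \<le> n \<Longrightarrow> gen_chain V S e m \<subseteq> gen_chain V S e n"
  by (rule lift_Suc_mono_le[of "gen_chain V S e"]) auto

definition chain_point :: "'x set \<Rightarrow> (('x \<Rightarrow> 'k::field) \<Rightarrow> 'k) set \<Rightarrow> (nat \<Rightarrow> 'x) \<Rightarrow> 'x \<Rightarrow> 'k" where
  "chain_point V S e w = step_val V (gen_chain V S e (LEAST n. e n = w)) w"

lemma point_gens_in_chain:
  assumes "finite W" "W \<subseteq> V" "V \<subseteq> range e"
  shows "\<exists>n. point_gens (chain_point V S e) W \<subseteq> gen_chain V S e n"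
proof -
  define L where "L w = (LEAST n. e n = w)" for w
  have at_stage: "var w - cst (chain_point V S e w) \<in> gen_chain V S e (Suc (L w))" if "w \<in> V" for w
  proof -
    have "e (L w) = w" unfolding L_def using that assms(3) by (auto intro: LeastI)
    then show ?thesis using that by (simp add: chain_point_def L_def)
  qed
  obtain n where n: "\<forall>w\<in>W. Suc (L w) \<le> n"
    using finite_nat_set_iff_bounded_le[of "(\<lambda>w. Suc (L w)) ` W"] assms(1) by auto
  have "point_gens (chain_point V S e) W \<subseteq> gen_chain V S e n"
    unfolding point_gens_def using at_stage n assms(2) gen_chain_mono by blast
  then show ?thesis by blast
qed

lemma finitely_solvable_proper:
  assumes "\<And>F. finite F \<Longrightarrow> F \<subseteq> S \<Longrightarrow> \<exists>c. \<forall>p\<in>F. p c = 0"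
  shows "(1 :: ('x \<Rightarrow> 'k::field) \<Rightarrow> 'k) \<notin> pideal V S"
proof
  assume "1 \<in> pideal V S"
  from pideal_vanishes_finite[OF this] obtain F where
    "finite F" "F \<subseteq> S" "\<forall>c. (\<forall>t\<in>F. t c = 0) \<longrightarrow> (1 :: ('x \<Rightarrow> 'k) \<Rightarrow> 'k) c = 0"
    by (elim exE conjE)
  moreover obtain c where "\<forall>p\<in>F. p c = 0" using assms \<open>finite F\<close> \<open>F \<subseteq> S\<close> by blast
  ultimately have "(1 :: ('x \<Rightarrow> 'k) \<Rightarrow> 'k) c = 0" by blast
  then show False by (simp add: fun_eval)
qed

text \<open>The limit point of the chain of proper ideals solves it: by the expansion lemma,
  p(c) is congruent to p modulo the chain at a late enough stage, so a nonzero p(c) would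
  make that stage the unit ideal.\<close>
theorem poly_compactness:
  fixes S :: "(('x \<Rightarrow> 'k::field) \<Rightarrow> 'k) set"
  assumes unc: "uncountable (UNIV :: 'k set)" and ac: "alg_closed_field TYPE('k)"
    and cV: "countable V" and SR: "S \<subseteq> polyfuns V"
    and fin_sol: "\<And>F. finite F \<Longrightarrow> F \<subseteq> S \<Longrightarrow> \<exists>c. \<forall>p\<in>F. p c = 0"
  shows "\<exists>c. \<forall>p\<in>S. p c = 0"
proof (intro exI ballI)
  define e where "e = from_nat_into V"
  define c where "c = chain_point V S e"
  have proper: "1 \<notin> pideal V (gen_chain V S e n)" for n
    using gen_chain_proper[OF unc ac cV finitely_solvable_proper[OF fin_sol]] .
  fix p assume p: "p \<in> S"
  obtain W where W: "finite W" "W \<subseteq> V" "p - cst (p c) \<in> pideal V (point_gens c W)"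
    using pf_expand_at_point[of p V] SR p by blast
  have "V \<subseteq> range e" unfolding e_def using from_nat_into_surj[OF cV] by blast
  then obtain n where "point_gens c W \<subseteq> gen_chain V S e n"
    using point_gens_in_chain[OF W(1,2)] unfolding c_def by blast
  then have "p - cst (p c) \<in> pideal V (gen_chain V S e n)"
    using pideal_mono W(3) by blast
  moreover have "p \<in> pideal V (gen_chain V S e n)"
    using p gen_chain_mono[of 0 n V S e] by (auto intro: pideal_base)
  ultimately have "p - (p - cst (p c)) \<in> pideal V (gen_chain V S e n)" by (rule pideal_diff[rotated])
  then have "cst (p c) \<in> pideal V (gen_chain V S e n)" by simp
  then show "p c = 0" using pideal_unit_const proper by blast
qed

lemma pf_local: "p \<in> polyfuns W \<Longrightarrow> (\<forall>w\<in>W. a w = b w) \<Longrightarrow> p a = p b"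
  by (induction p rule: polyfuns.induct) auto

lemma pf_subst:
  assumes "p \<in> polyfuns W" "\<forall>w\<in>W. \<sigma> w \<in> V"
  shows "(\<lambda>X. p (\<lambda>w. X (\<sigma> w))) \<in> (polyfuns V :: (('y \<Rightarrow> 'k::field) \<Rightarrow> 'k) set)"
  using assms
proof (induction p rule: polyfuns.induct)
  case (pf_const c) show ?case by (rule polyfuns.pf_const)
next
  case (pf_var w) then show ?case by (simp add: polyfuns.pf_var)
next
  case (pf_add p q) then show ?case using polyfuns.pf_add by fastforce
next
  case (pf_mult p q) then show ?case using polyfuns.pf_mult by fastforce
qed

section \<open>Cellular automata: equivariance and locality\<close>

lemma shift_shift: "shift a (shift b x) = shift (a + b) x"
  by (simp only: shift_def minus_add add.assoc)

lemma shift_configs: "x \<in> configs A \<Longrightarrow> shift g x \<in> configs A"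
  by (simp add: configs_def shift_def)

lemma restrict_shift_PiE: "x \<in> configs A \<Longrightarrow> restrict (shift g x) M \<in> M \<rightarrow>\<^sub>E A"
  by (auto simp: configs_def shift_def)

lemma ca_equivariant:
  assumes ca: "ca_local A M \<mu> \<tau>" and x: "x \<in> configs A"
  shows "\<tau> (shift k x) = shift k (\<tau> x)"
proof
  fix h
  have "\<tau> (shift k x) h = \<mu> (restrict (shift (- h) (shift k x)) M)"
    using ca shift_configs[OF x] unfolding ca_local_def by blast
  also have "shift (- h) (shift k x) = shift (- (- k + h)) x"
    by (simp add: shift_shift minus_add)
  also have "\<mu> (restrict (shift (- (- k + h)) x) M) = \<tau> x (- k + h)"
    using ca x unfolding ca_local_def by simp
  also have "\<dots> = shift k (\<tau> x) h" by (simp add: shift_def)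
  finally show "\<tau> (shift k x) h = shift k (\<tau> x) h" .
qed

definition gen_subgroup :: "'g::group_add set \<Rightarrow> 'g set" where
  "gen_subgroup M = (\<lambda>l. foldl (+) 0 l) ` lists (M \<union> uminus ` M)"

lemma gen_subgroup_zero: "0 \<in> gen_subgroup M"
  unfolding gen_subgroup_def by (intro image_eqI[of _ _ "[]"]) auto

lemma gen_subgroup_add: "h \<in> gen_subgroup M \<Longrightarrow> m \<in> M \<Longrightarrow> h + m \<in> gen_subgroup M"
  unfolding gen_subgroup_def by (auto intro!: image_eqI[of _ _ "_ @ [m]"])

lemma gen_subgroup_add_neg: "h \<in> gen_subgroup M \<Longrightarrow> m \<in> M \<Longrightarrow> h + - m \<in> gen_subgroup M"
  unfolding gen_subgroup_def by (auto intro!: image_eqI[of _ _ "_ @ [- m]"])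

lemma gen_subgroup_add_cancel: "h + m \<in> gen_subgroup M \<Longrightarrow> m \<in> M \<Longrightarrow> h \<in> gen_subgroup M"
  using gen_subgroup_add_neg[of "h + m" M m] by (simp add: add.assoc)

lemma gen_subgroup_countable: "finite M \<Longrightarrow> countable (gen_subgroup M)"
  unfolding gen_subgroup_def by (intro countable_image countable_lists) (auto intro: countable_finite)

lemma ca_agree_outside:
  assumes ca: "ca_local A M \<mu> \<tau>" and x: "x \<in> configs A" and y: "y \<in> configs A"
    and closed: "\<And>g m. g + m \<in> H \<Longrightarrow> m \<in> M \<Longrightarrow> g \<in> H"
    and agree: "\<And>g. g \<notin> H \<Longrightarrow> x g = y g" and g: "g \<notin> H"
  shows "\<tau> x g = \<tau> y g"
proof -
  have "restrict (shift (- g) x) M = restrict (shift (- g) y) M"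
    using closed agree g by (auto simp: shift_def fun_eq_iff)
  then show ?thesis using ca x y unfolding ca_local_def by simp
qed

definition rule_eval :: "('v \<Rightarrow> ('g \<times> 'v \<Rightarrow> 'k) \<Rightarrow> 'k) \<Rightarrow> 'g::plus \<Rightarrow> ('g \<Rightarrow> 'v \<Rightarrow> 'k) \<Rightarrow> 'v \<Rightarrow> 'k" where
  "rule_eval P g x = (\<lambda>w. P w (\<lambda>mu. x (g + fst mu) (snd mu)))"

lemma rule_eval_local:
  assumes PR: "\<And>w. P w \<in> polyfuns (M \<times> UNIV)" and agree: "\<And>m. m \<in> M \<Longrightarrow> x (g + m) = y (g + m)"
  shows "rule_eval P g x = rule_eval P g y"
  unfolding rule_eval_def by (rule ext, rule pf_local[OF PR]) (auto simp: agree)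

lemma ca_rule_eval:
  assumes ca: "ca_local A M \<mu> \<tau>"
    and PR: "\<And>w. P w \<in> polyfuns (M \<times> UNIV)"
    and Pmu: "\<And>w p. p \<in> M \<rightarrow>\<^sub>E A \<Longrightarrow> \<mu> p w = P w (\<lambda>(h, w'). p h w')"
    and x: "x \<in> configs A"
  shows "\<tau> x g = rule_eval P g x"
proof
  fix w
  have "\<tau> x g w = P w (\<lambda>(h, w'). restrict (shift (- g) x) M h w')"
    using ca x Pmu[OF restrict_shift_PiE[OF x]] unfolding ca_local_def by simp
  also have "\<dots> = rule_eval P g x w"
    unfolding rule_eval_def by (rule pf_local[OF PR]) (auto simp: shift_def)
  finally show "\<tau> x g w = rule_eval P g x w" .
qed

section \<open>Pairs of configurations as solutions of a polynomial system\<close>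

text \<open>Variables Inl (g, w, b) hold coordinate w of cell g of the configuration number b;
  variables Inr w are Rabinowitsch variables witnessing that the two configurations
  differ at the cell 0.\<close>
definition layer :: "bool \<Rightarrow> (('g \<times> 'v \<times> bool) + 'v \<Rightarrow> 'k) \<Rightarrow> 'g \<Rightarrow> 'v \<Rightarrow> 'k" where
  "layer b X = (\<lambda>g w. X (Inl (g, w, b)))"

definition separating_poly :: "(('g::zero \<times> 'v::finite \<times> bool) + 'v \<Rightarrow> 'k::field) \<Rightarrow> 'k" where
  "separating_poly X = (\<Sum>w\<in>UNIV. X (Inr w) * (layer True X 0 w - layer False X 0 w)) - 1"

definition pair_system :: "(('v::finite \<Rightarrow> 'k::field) \<Rightarrow> 'k) set \<Rightarrow> ('v \<Rightarrow> ('g \<times> 'v \<Rightarrow> 'k) \<Rightarrow> 'k)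
    \<Rightarrow> 'g::monoid_add set \<Rightarrow> ((('g \<times> 'v \<times> bool) + 'v \<Rightarrow> 'k) \<Rightarrow> 'k) set" where
  "pair_system SA P N = insert separating_poly
     ({\<lambda>X. q (layer b X h) | h b q. h \<in> N \<and> q \<in> SA} \<union>
      {\<lambda>X. rule_eval P h (layer True X) w - rule_eval P h (layer False X) w | h w. h \<in> N})"

lemma pair_system_mono: "N \<subseteq> N' \<Longrightarrow> pair_system SA P N \<subseteq> pair_system SA P N'"
  unfolding pair_system_def by blast

lemma pair_system_polyfuns:
  assumes SAR: "SA \<subseteq> polyfuns UNIV" and PR: "\<And>w. P w \<in> polyfuns (M \<times> UNIV)"
    and H0: "0 \<in> H" and Hadd: "\<And>h m. h \<in> H \<Longrightarrow> m \<in> M \<Longrightarrow> h + m \<in> H"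
  shows "pair_system SA P H \<subseteq> polyfuns (Inl ` (H \<times> UNIV \<times> UNIV) \<union> range Inr)"
    (is "_ \<subseteq> polyfuns ?V")
proof -
  have sep: "separating_poly
      = (\<Sum>w\<in>UNIV. var (Inr w) * (var (Inl (0, w, True)) - var (Inl (0, w, False)))) - 1"
    by (simp add: separating_poly_def layer_def fun_eq_iff fun_eval fun_sum_apply)
  have "separating_poly \<in> polyfuns ?V"
    unfolding sep using H0 by (intro pf_diff pf_sum pf_mult' pf_var' pf_one) auto
  moreover have "(\<lambda>X. q (layer b X h)) \<in> polyfuns ?V" if "h \<in> H" "q \<in> SA" for h b q
    unfolding layer_def by (rule pf_subst[of q UNIV]) (use that SAR in auto)
  moreover have "(\<lambda>X. rule_eval P h (layer True X) w - rule_eval P h (layer False X) w) \<in> polyfuns ?V"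
    if "h \<in> H" for h w
  proof -
    have img: "(\<lambda>X. rule_eval P h (layer b X) w) \<in> polyfuns ?V" for b
      unfolding rule_eval_def layer_def by (rule pf_subst[OF PR]) (use that Hadd in auto)
    show ?thesis using pf_diff[OF img img] by (simp add: fun_diff_def)
  qed
  ultimately show ?thesis unfolding pair_system_def by blast
qed

lemma pair_system_finite_subset:
  assumes "finite F" "F \<subseteq> pair_system SA P H"
  shows "\<exists>N. finite N \<and> N \<subseteq> H \<and> F \<subseteq> pair_system SA P N"
proof -
  have "\<exists>N. finite N \<and> N \<subseteq> H \<and> p \<in> pair_system SA P N" if "p \<in> F" for p
  proof -
    have "p \<in> pair_system SA P H" using that assms(2) by blast
    then consider "p = separating_poly" | h where "h \<in> H" "p \<in> pair_system SA P {h}"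
      unfolding pair_system_def by blast
    then show ?thesis
    proof cases
      case 1 then show ?thesis by (intro exI[of _ "{}"]) (simp add: pair_system_def)
    next
      case (2 h) then show ?thesis by (intro exI[of _ "{h}"]) auto
    qed
  qed
  then obtain N where N: "\<And>p. p \<in> F \<Longrightarrow> finite (N p) \<and> N p \<subseteq> H \<and> p \<in> pair_system SA P (N p)"
    by metis
  have "F \<subseteq> pair_system SA P (\<Union>p\<in>F. N p)"
    using N pair_system_mono[of _ "\<Union>p\<in>F. N p"] by blast
  then show ?thesis using N assms(1) by (intro exI[of _ "\<Union>p\<in>F. N p"]) auto
qed

lemma pair_system_encode:
  assumes SAA: "A = {a. \<forall>q\<in>SA. q a = 0}" and x: "x \<in> configs A" and y: "y \<in> configs A"
    and agree: "\<And>h. h \<in> N \<Longrightarrow> rule_eval P h x = rule_eval P h y" and differ: "x 0 w0 \<noteq> y 0 w0"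
  shows "\<exists>X. \<forall>p\<in>pair_system SA P N. p X = 0"
proof
  define X where "X z = (case z of Inl (g, w, b) \<Rightarrow> (if b then x g w else y g w)
    | Inr w \<Rightarrow> (if w = w0 then 1 / (x 0 w0 - y 0 w0) else 0))" for z
  have layers: "layer True X = x" "layer False X = y" by (simp_all add: X_def layer_def fun_eq_iff)
  have "X (Inr w) * (x 0 w - y 0 w) = (if w = w0 then 1 else 0)" for w
    using differ by (simp add: X_def)
  then have "separating_poly X = 0" by (simp add: separating_poly_def layers)
  moreover have "q (layer b X h) = 0" if "q \<in> SA" for q b h
  proof -
    have "layer b X h \<in> A" using x y by (cases b) (auto simp: layers configs_def)
    then show ?thesis using that SAA by blast
  qed
  ultimately show "\<forall>p\<in>pair_system SA P N. p X = 0"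
    using agree by (auto simp: pair_system_def layers)
qed

lemma pair_system_decode:
  assumes SAA: "A = {a. \<forall>q\<in>SA. q a = 0}" and sol: "\<forall>p\<in>pair_system SA P H. p X = 0"
  shows "\<And>h b. h \<in> H \<Longrightarrow> layer b X h \<in> A"
    and "\<And>h. h \<in> H \<Longrightarrow> rule_eval P h (layer True X) = rule_eval P h (layer False X)"
    and "layer True X 0 \<noteq> layer False X 0"
proof -
  fix h b assume h: "h \<in> H"
  have "q (layer b X h) = 0" if "q \<in> SA" for q
  proof -
    have "(\<lambda>X. q (layer b X h)) \<in> pair_system SA P H"
      unfolding pair_system_def using h that by blast
    from bspec[OF sol this] show ?thesis by simp
  qed
  then show "layer b X h \<in> A" using SAA by blast
next
  fix h assume h: "h \<in> H"
  show "rule_eval P h (layer True X) = rule_eval P h (layer False X)"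
  proof
    fix w
    have "(\<lambda>X. rule_eval P h (layer True X) w - rule_eval P h (layer False X) w) \<in> pair_system SA P H"
      unfolding pair_system_def using h by blast
    from bspec[OF sol this] show "rule_eval P h (layer True X) w = rule_eval P h (layer False X) w"
      by simp
  qed
next
  show "layer True X 0 \<noteq> layer False X 0"
  proof
    assume "layer True X 0 = layer False X 0"
    then have "separating_poly X = - 1" by (simp add: separating_poly_def)
    then show False using sol by (simp add: pair_system_def)
  qed
qed

section \<open>The inverse is determined by a finite window\<close>

text \<open>A solution of the system over the subgroup generated by M yields two distinct
  configurations with the same image: extend both layers outside H by one common value;
  inside H the images agree by the equations, outside H by locality.\<close>
lemma solution_gives_collision:
  assumes SAA: "A = {a. \<forall>q\<in>SA. q a = 0}" and ca: "ca_local A M \<mu> \<tau>"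
    and PR: "\<And>w. P w \<in> polyfuns (M \<times> UNIV)"
    and Pmu: "\<And>w p. p \<in> M \<rightarrow>\<^sub>E A \<Longrightarrow> \<mu> p w = P w (\<lambda>(h, w'). p h w')"
    and sol: "\<forall>p\<in>pair_system SA P (gen_subgroup M). p X = 0"
  shows "\<exists>x\<in>configs A. \<exists>y\<in>configs A. \<tau> x = \<tau> y \<and> x \<noteq> y"
proof -
  define H where "H = gen_subgroup M"
  note decode = pair_system_decode[OF SAA sol[folded H_def]]
  define z where "z b g = (if g \<in> H then layer b X g else layer True X 0)" for b g
  have H0: "0 \<in> H" unfolding H_def by (rule gen_subgroup_zero)
  have conf: "z b \<in> configs A" for b
    using decode(1) H0 by (auto simp: configs_def z_def)
  have "\<tau> (z True) = \<tau> (z False)"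
  proof (rule ext)
    fix g show "\<tau> (z True) g = \<tau> (z False) g"
    proof (cases "g \<in> H")
      case True
      have "rule_eval P g (z b) = rule_eval P g (layer b X)" for b
        by (rule rule_eval_local[OF PR]) (use True gen_subgroup_add in \<open>auto simp: z_def H_def\<close>)
      then show ?thesis using ca_rule_eval[OF ca PR Pmu conf] decode(2)[OF True] by simp
    next
      case False
      show ?thesis
        by (rule ca_agree_outside[OF ca conf conf _ _ False])
          (auto simp: z_def H_def intro: gen_subgroup_add_cancel)
    qed
  qed
  moreover have "z True \<noteq> z False" using decode(3) H0 by (auto simp: z_def fun_eq_iff)
  ultimately show ?thesis using conf by blast
qed

text \<open>Otherwise the polynomial system over the subgroup generated by M is finitely solvable,
  hence solvable by compactness, contradicting injectivity.\<close>
lemma finite_determination: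
  fixes A :: "('v::finite \<Rightarrow> 'k::field) set"
    and \<tau> :: "('g::group_add \<Rightarrow> 'v \<Rightarrow> 'k) \<Rightarrow> ('g \<Rightarrow> 'v \<Rightarrow> 'k)"
  assumes unc: "uncountable (UNIV :: 'k set)" and ac: "alg_closed_field TYPE('k)"
    and SAR: "SA \<subseteq> polyfuns UNIV" and SAA: "A = {a. \<forall>q\<in>SA. q a = 0}"
    and ca: "ca_local A M \<mu> \<tau>"
    and PR: "\<And>w. P w \<in> polyfuns (M \<times> UNIV)"
    and Pmu: "\<And>w p. p \<in> M \<rightarrow>\<^sub>E A \<Longrightarrow> \<mu> p w = P w (\<lambda>(h, w'). p h w')"
    and inj: "inj_on \<tau> (configs A)"
  shows "\<exists>N. finite N \<and> (\<forall>x\<in>configs A. \<forall>y\<in>configs A. (\<forall>h\<in>N. \<tau> x h = \<tau> y h) \<longrightarrow> x 0 = y 0)"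
proof (rule ccontr)
  assume no_window: "\<not> ?thesis"
  define H where "H = gen_subgroup M"
  have "countable H" unfolding H_def using ca by (simp add: ca_local_def gen_subgroup_countable)
  then have cV: "countable (Inl ` (H \<times> UNIV \<times> UNIV) \<union> range Inr :: (('g \<times> 'v \<times> bool) + 'v) set)"
    by (auto intro: countable_SIGMA)
  have sys: "pair_system SA P H \<subseteq> polyfuns (Inl ` (H \<times> UNIV \<times> UNIV) \<union> range Inr)"
    by (rule pair_system_polyfuns[OF SAR PR]) (auto simp: H_def gen_subgroup_zero gen_subgroup_add)
  have "\<exists>X. \<forall>p\<in>F. p X = 0" if F: "finite F" "F \<subseteq> pair_system SA P H" for F
  proof -
    obtain N where N: "finite N" "F \<subseteq> pair_system SA P N"
      using pair_system_finite_subset[OF F] by blast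
    then obtain x y where xy: "x \<in> configs A" "y \<in> configs A" "\<forall>h\<in>N. \<tau> x h = \<tau> y h" "x 0 \<noteq> y 0"
      using no_window by blast
    then obtain w0 where "x 0 w0 \<noteq> y 0 w0" by (auto simp: fun_eq_iff)
    with xy obtain X where "\<forall>p\<in>pair_system SA P N. p X = 0"
      using pair_system_encode[OF SAA xy(1,2)] ca_rule_eval[OF ca PR Pmu] by metis
    then show ?thesis using N(2) by blast
  qed
  then obtain X where "\<forall>p\<in>pair_system SA P H. p X = 0"
    using poly_compactness[OF unc ac cV sys] by blast
  then show False
    using solution_gives_collision[OF SAA ca PR Pmu] inj unfolding H_def inj_on_def by blast
qed

section \<open>The inverse automaton\<close>

text \<open>A bijective cellular automaton whose inverse reads x(0) off a finite window N of the
  image is reversible: the inverse has memory set N \<union> {0}, with local rule sending a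
  pattern to the common value x(0) of all preimages x realising it.\<close>
lemma inverse_is_ca:
  assumes ca: "ca_local A M \<mu> \<tau>" and bij: "bij_betw \<tau> (configs A) (configs A)"
    and N: "finite N"
    and det: "\<forall>x\<in>configs A. \<forall>y\<in>configs A. (\<forall>h\<in>N. \<tau> x h = \<tau> y h) \<longrightarrow> x 0 = y 0"
  shows "cellular_automaton A (the_inv_into (configs A) \<tau>)"
proof -
  define N0 where "N0 = insert 0 N"
  define \<sigma> where "\<sigma> = the_inv_into (configs A) \<tau>"
  have rule: "\<exists>a. a \<in> A \<and> (\<forall>x\<in>configs A. restrict (\<tau> x) N0 = p \<longrightarrow> x 0 = a)"
    if p: "p \<in> N0 \<rightarrow>\<^sub>E A" for p
  proof (cases "\<exists>x\<in>configs A. restrict (\<tau> x) N0 = p")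
    case True
    then obtain x where x: "x \<in> configs A" "restrict (\<tau> x) N0 = p" by blast
    have "y 0 = x 0" if "y \<in> configs A" "restrict (\<tau> y) N0 = p" for y
      using det x that unfolding N0_def by (metis insertCI restrict_apply')
    then show ?thesis using x(1) by (intro exI[of _ "x 0"]) (auto simp: configs_def)
  next
    case False
    then show ?thesis using p by (intro exI[of _ "p 0"]) (auto simp: N0_def)
  qed
  define \<nu> where "\<nu> p = (SOME a. a \<in> A \<and> (\<forall>x\<in>configs A. restrict (\<tau> x) N0 = p \<longrightarrow> x 0 = a))" for p
  have \<nu>: "\<nu> p \<in> A \<and> (\<forall>x\<in>configs A. restrict (\<tau> x) N0 = p \<longrightarrow> x 0 = \<nu> p)" if "p \<in> N0 \<rightarrow>\<^sub>E A" for p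
    unfolding \<nu>_def using someI_ex[OF rule[OF that]] .
  have "\<sigma> y g = \<nu> (restrict (shift (- g) y) N0)" if y: "y \<in> configs A" for y g
  proof -
    have x: "\<sigma> y \<in> configs A"
      unfolding \<sigma>_def using bij y by (metis bij_betw_def the_inv_into_into order_refl)
    have tx: "\<tau> (\<sigma> y) = y"
      unfolding \<sigma>_def using bij y by (simp add: f_the_inv_into_f_bij_betw)
    have "\<tau> (shift (- g) (\<sigma> y)) = shift (- g) y" using ca_equivariant[OF ca x] tx by simp
    then have "shift (- g) (\<sigma> y) 0 = \<nu> (restrict (shift (- g) y) N0)"
      using \<nu>[OF restrict_shift_PiE[OF y, of "- g" N0]] shift_configs[OF x, of "- g"] by metis
    then show ?thesis by (simp add: shift_def)
  qed
  then have "ca_local A N0 \<nu> \<sigma>"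
    using \<nu> N unfolding ca_local_def N0_def by blast
  then show ?thesis unfolding cellular_automaton_def \<sigma>_def by blast
qed

theorem theorem1p3:
  fixes A :: "('v::finite \<Rightarrow> 'k::field) set"
    and \<tau> :: "('g::group_add \<Rightarrow> 'v \<Rightarrow> 'k) \<Rightarrow> ('g \<Rightarrow> 'v \<Rightarrow> 'k)"
  assumes "uncountable (UNIV :: 'k set)"
    and "alg_closed_field TYPE('k)"
    and "affine_algebraic_set A"
    and "algebraic_ca A \<tau>"
    and "bij_betw \<tau> (configs A) (configs A)"
  shows "reversible_ca A \<tau>"
proof -
  from assms(3) obtain SA where SAR: "SA \<subseteq> polyfuns UNIV" and SAA: "A = {x. \<forall>p\<in>SA. p x = 0}"
    unfolding affine_algebraic_set_def by blast
  from assms(4) obtain M \<mu> where ca: "ca_local A M \<mu> \<tau>" and "regular_local A M \<mu>"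
    unfolding algebraic_ca_def by blast
  then obtain P where PR: "\<And>w. P w \<in> polyfuns (M \<times> UNIV)"
    and Pmu: "\<And>w p. p \<in> M \<rightarrow>\<^sub>E A \<Longrightarrow> \<mu> p w = P w (\<lambda>(h, w'). p h w')"
    unfolding regular_local_def by metis
  have "inj_on \<tau> (configs A)" using assms(5) by (simp add: bij_betw_def)
  then obtain N where "finite N"
    "\<forall>x\<in>configs A. \<forall>y\<in>configs A. (\<forall>h\<in>N. \<tau> x h = \<tau> y h) \<longrightarrow> x 0 = y 0"
    using finite_determination[OF assms(1,2) SAR SAA ca PR Pmu] by blast
  then have "cellular_automaton A (the_inv_into (configs A) \<tau>)"
    by (rule inverse_is_ca[OF ca assms(5)])
  then show ?thesis unfolding reversible_ca_def using assms(5) by blast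
qed

end
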